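(* Let $n\in\mathbb{N}=\{1,2,\dots\}$, $0\le i\le n-1$, and let $t_1<\dots<t_n$ be the zeros of $H_n$. (i) If $i$ is even, then $$\int_{-\infty}^\infty\frac{t^i}{i!}|h_n(t)|\,dt=\frac{1}{n!}\sum_{m=1}^n(-1)^{m+n}\sum_{k=0}^i\frac{(n-1-k)!}{2^k(i-k)!}t_m^{i-k}h_{n-1-k}(t_m).$$ (ii) If $i$ is odd and $n$ is even, then $$\int_{-\infty}^\infty\frac{|t|^i}{i!}|h_n(t)|\,dt=\frac{1}{n!}\sum_{m=1}^{n/2}(-1)^{m+1}\sum_{k=0}^i\frac{(n-1-k)!}{2^k(i-k)!}t_m^{i-k}h_{n-1-k}(t_m)+\frac{(-1)^{n/2}(n-1-i)!}{n!\,2^i}h_{n-1-i}(0)+\frac{1}{n!}\sum_{m=\frac n2+1}^{n}(-1)^{m}\sum_{k=0}^i\frac{(n-1-k)!}{2^k(i-k)!}t_m^{i-k}h_{n-1-k}(t_m);$$ and if $i$ is odd and $n$ is odd, then $$\int_{-\infty}^\infty\frac{|t|^i}{i!}|h_n(t)|\,dt=\frac{1}{n!}\sum_{m=1}^{\frac{n-1}{2}}(-1)^{m}\sum_{k=0}^i\frac{(n-1-k)!}{2^k(i-k)!}t_m^{i-k}h_{n-1-k}(t_m)+\frac{1}{n!}\sum_{m=\frac{n+3}{2}}^{n}(-1)^{m+1}\sum_{k=0}^i\frac{(n-1-k)!}{2^k(i-k)!}t_m^{i-k}h_{n-1-k}(t_m).$$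
   Context: $H_n$ denotes the $n$-th Hermite polynomial ($H_n(t)=(-1)^ne^{t^2}\frac{d^n}{dt^n}e^{-t^2}$, so $H_0=1$, $H_1(t)=2t$), and the Hermite functions are $h_n(t)=\frac{1}{2^nn!\sqrt{\pi}}e^{-t^2}H_n(t)$, $t\in\mathbb{R}$. The zeros of $H_n$ are real, simple and symmetric about $0$. *)

theory Defs
  imports "HOL-Analysis.Analysis"
begin

definition hermite :: "nat \<Rightarrow> real \<Rightarrow> real" where
  "hermite n t = (-1) ^ n * exp (t\<^sup>2) * ((deriv ^^ n) (\<lambda>x. exp (- (x\<^sup>2))) t)"

definition hermite_fun :: "nat \<Rightarrow> real \<Rightarrow> real" where
  "hermite_fun n t = exp (- (t\<^sup>2)) * hermite n t / (2 ^ n * fact n * sqrt pi)"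

definition inner_term :: "nat \<Rightarrow> nat \<Rightarrow> real \<Rightarrow> real" where
  "inner_term n i x = (\<Sum>k=0..i. fact (n - 1 - k) / (2 ^ k * fact (i - k)) * x ^ (i - k)
                                  * hermite_fun (n - 1 - k) x)"

end

theory Submission
  imports Defs "HOL-Computational_Algebra.Polynomial" "HOL-Real_Asymp.Real_Asymp"
begin

text \<open>
  The zeros t_1 < ... < t_n of H_n cut the real line into n + 1 open intervals, and on the j-th of
  them h_n has the constant sign (-1)^(n-j). Since h_m' = -2(m+1) h_(m+1), the derivative of the
  inner sum telescopes: -inner_term n i / (2 n!) is an antiderivative of f(x) = x^i h_n(x) / i!, and
  it vanishes at infinity. On each interval |f| = f or |f| = -f, so integrating |f| interval by
  interval and summing by parts leaves only the sign jumps at the zeros. For odd i the factor |x|^i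
  changes sign at 0 as well: for odd n, 0 is the middle zero and the two sign changes cancel; for
  even n, 0 is an extra endpoint and contributes the term with h_(n-1-i)(0).
\<close>

lemma prod_linear_factors_dvd:
  fixes p :: "'a::idom poly"
  assumes "finite S" "\<And>a. a \<in> S \<Longrightarrow> poly p a = 0"
  shows "(\<Prod>a\<in>S. [:- a, 1:]) dvd p"
  using assms
proof (induction S arbitrary: p rule: finite_induct)
  case empty
  then show ?case by simp
next
  case (insert a S)
  have "[:- a, 1:] dvd p"
    using insert.prems by (simp add: poly_eq_0_iff_dvd)
  then obtain q where q: "p = [:- a, 1:] * q" ..
  have "poly q b = 0" if "b \<in> S" for b
    using insert.prems[of b] that insert.hyps(2) by (auto simp: q)
  then have "(\<Prod>b\<in>S. [:- b, 1:]) dvd q" by (rule insert.IH)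
  moreover have "(\<Prod>b\<in>insert a S. [:- b, 1:]) = [:- a, 1:] * (\<Prod>b\<in>S. [:- b, 1:])"
    using insert.hyps by (rule prod.insert)
  ultimately show ?case
    unfolding q by (simp only: mult_dvd_mono[OF dvd_refl])
qed

lemma poly_eq_lead_coeff_prod_roots:
  fixes p :: "'a::idom poly"
  assumes "finite S" "\<And>a. a \<in> S \<Longrightarrow> poly p a = 0" "p \<noteq> 0" "card S = degree p"
  shows "poly p x = lead_coeff p * (\<Prod>a\<in>S. x - a)"
proof -
  obtain q where q: "p = (\<Prod>a\<in>S. [:- a, 1:]) * q"
    using prod_linear_factors_dvd[OF assms(1,2)] by blast
  have "q \<noteq> 0"
    using q assms(3) by auto
  moreover have "(\<Prod>a\<in>S. [:- a, 1:]) \<noteq> 0"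
    using assms(1) by (simp add: prod_zero_iff)
  ultimately have "degree p = degree (\<Prod>a\<in>S. [:- a, 1:]) + degree q"
    unfolding q by (rule degree_mult_eq[rotated])
  moreover have "degree (\<Prod>a\<in>S. [:- a, 1:]) = card S"
    by (subst degree_prod_eq_sum_degree) auto
  ultimately have "degree q = 0"
    using assms(4) by simp
  then have "q = [:lead_coeff q:]"
    using degree_0_id[of q] by simp
  moreover have "lead_coeff p = lead_coeff q"
    using q by (simp add: lead_coeff_mult lead_coeff_prod)
  ultimately have "poly q x = lead_coeff p"
    by (metis poly_pCons poly_0 mult_zero_right add.right_neutral)
  then show ?thesis
    unfolding q poly_mult by (simp add: poly_prod mult.commute)
qed

lemma card_eq_twice_card_negative:
  fixes Z :: "'a::linordered_ab_group_add set"
  assumes "finite Z" "\<And>x. x \<in> Z \<Longrightarrow> - x \<in> Z"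
  shows "card Z = 2 * card {x\<in>Z. x < 0} + (if 0 \<in> Z then 1 else 0)"
proof -
  define N where "N = {x\<in>Z. x < 0}"
  have "uminus ` N = {x\<in>Z. 0 < x}"
    using assms(2) unfolding N_def by (auto intro!: image_eqI[where x = "- x" for x])
  moreover have "card (uminus ` N) = card N"
    by (rule card_image) (simp add: inj_on_def)
  moreover have "Z = N \<union> {x\<in>Z. 0 < x} \<union> (Z \<inter> {0})"
    unfolding N_def by auto
  moreover have "card (N \<union> {x\<in>Z. 0 < x} \<union> (Z \<inter> {0})) = card N + card {x\<in>Z. 0 < x} + card (Z \<inter> {0})"
    using assms(1) unfolding N_def by (subst card_Un_disjoint card_Un_disjoint; auto)+
  ultimately show ?thesis
    unfolding N_def by (auto simp: Int_insert_right)
qed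

lemma strict_mono_on_less_iff_le_card:
  fixes t :: "nat \<Rightarrow> 'a::linorder"
  assumes mono: "strict_mono_on {1..n} t" and "m \<in> {1..n}"
  shows "t m < c \<longleftrightarrow> m \<le> card {k\<in>{1..n}. t k < c}"
proof
  assume "t m < c"
  then have "{1..m} \<subseteq> {k\<in>{1..n}. t k < c}"
    using assms(2) strict_mono_on_leD[OF mono] by fastforce
  then show "m \<le> card {k\<in>{1..n}. t k < c}"
    using card_mono[of "{k\<in>{1..n}. t k < c}" "{1..m}"] by simp
next
  assume "m \<le> card {k\<in>{1..n}. t k < c}"
  moreover have "{k\<in>{1..n}. t k < c} \<subseteq> {1..m - 1}" if "\<not> t m < c"
    using that assms(2) strict_mono_on_leD[OF mono, of m] by (fastforce simp: not_less)
  then have "\<not> t m < c \<Longrightarrow> card {k\<in>{1..n}. t k < c} \<le> m - 1"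
    using card_mono[of "{1..m - 1}"] by fastforce
  ultimately show "t m < c"
    using assms(2) by fastforce
qed

lemma sum_mult_diff_by_parts:
  fixes e v :: "nat \<Rightarrow> 'a::comm_ring"
  shows "(\<Sum>j=0..N. e j * (v (Suc j) - v j)) =
           (\<Sum>m=1..N. (e (m - 1) - e m) * v m) + e N * v (Suc N) - e 0 * v 0"
  by (induction N) (simp_all add: algebra_simps)

lemma sum_split_at:
  assumes "a \<le> Suc k" "Suc k \<le> b"
  shows "(\<Sum>m=a..b. f m) = (\<Sum>m=a..k. f m) + f (Suc k) + (\<Sum>m=Suc (Suc k)..b. f m)"
proof -
  have "(\<Sum>m=a..b. f m) = (\<Sum>m=a..k. f m) + (\<Sum>m=Suc k..b. f m)"
    using sum.ub_add_nat[of a k f "b - k"] assms by simp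
  also have "(\<Sum>m=Suc k..b. f m) = f (Suc k) + (\<Sum>m=Suc (Suc k)..b. f m)"
    using assms(2) by (rule sum.atLeast_Suc_atMost)
  finally show ?thesis
    by (simp only: add.assoc)
qed

lemma minus_one_power_diff:
  assumes "j \<le> n"
  shows "(-1::'a::ring_1) ^ (n - j) = (-1) ^ (n + j)"
proof -
  have "(-1::'a) ^ (n + j) = (-1) ^ (n - j + 2 * j)"
    using assms by (intro arg_cong[where f = "power (-1)"]) simp
  also have "\<dots> = (-1) ^ (n - j)"
    by (simp add: power_add power_mult)
  finally show ?thesis ..
qed

lemma minus_one_power_pred: "0 < m \<Longrightarrow> (-1::'a::ring_1) ^ (k + (m - 1)) = - ((-1) ^ (k + m))"
  by (cases m) auto

lemma mult_sign_nonneg: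
  fixes a b c s :: "'a::linordered_idom"
  assumes "0 < b * c" "0 \<le> s * a"
  shows "0 \<le> (s * b) * (a * c)"
  using mult_nonneg_nonneg[OF assms(2) less_imp_le[OF assms(1)]] by (simp add: mult_ac)

section \<open>Gaps between nodes\<close>

text \<open>The nodes \<open>s 1 < \<dots> < s N\<close> cut the real line into the open intervals
  \<open>gap s N 0, \<dots>, gap s N N\<close>; the first and the last are unbounded.\<close>

definition gap :: "(nat \<Rightarrow> real) \<Rightarrow> nat \<Rightarrow> nat \<Rightarrow> real set" where
  "gap s N j = {x. (j = 0 \<or> s j < x) \<and> (j = N \<or> x < s (Suc j))}"

lemma gap_eq_einterval:
  "gap s N j = einterval (if j = 0 then -\<infinity> else ereal (s j)) (if j = N then \<infinity> else ereal (s (Suc j)))"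
  by (auto simp: gap_def einterval_def)

lemma ex1_gap:
  assumes mono: "strict_mono_on {1..N} s" and "x \<notin> s ` {1..N}"
  shows "\<exists>!j. j \<le> N \<and> x \<in> gap s N j"
proof -
  define J where "J = card {k\<in>{1..N}. s k < x}"
  have less_iff: "s m < x \<longleftrightarrow> m \<le> J" if "m \<in> {1..N}" for m
    unfolding J_def using strict_mono_on_less_iff_le_card[OF mono that] .
  have greater: "x < s m" if "m \<in> {1..N}" "J < m" for m
    using less_iff[OF that(1)] that assms(2) by (metis image_eqI linorder_neqE_linordered_idom not_le)
  have "J \<le> card {1..N}"
    unfolding J_def by (rule card_mono) auto
  then have "J \<le> N"
    by simp
  moreover have "J = 0 \<or> s J < x"
    using less_iff[of J] \<open>J \<le> N\<close> by (cases "J = 0") auto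
  moreover have "J = N \<or> x < s (Suc J)"
    using greater[of "Suc J"] \<open>J \<le> N\<close> by (cases "J = N") auto
  ultimately have "J \<le> N \<and> x \<in> gap s N J"
    by (simp add: gap_def)
  moreover have "j = J" if "j \<le> N" "x \<in> gap s N j" for j
    using that less_iff[of j] less_iff[of "Suc j"] \<open>J \<le> N\<close> by (fastforce simp: gap_def)
  ultimately show ?thesis
    by blast
qed

definition insert_node :: "nat \<Rightarrow> real \<Rightarrow> (nat \<Rightarrow> real) \<Rightarrow> nat \<Rightarrow> real" where
  "insert_node K c t m = (if m \<le> K then t m else if m = Suc K then c else t (m - 1))"

context
  fixes t :: "nat \<Rightarrow> real" and N K :: nat and c :: real
  assumes mono: "strict_mono_on {1..N} t" and "K \<le> N"
    and below: "1 \<le> K \<Longrightarrow> t K < c" and above: "K < N \<Longrightarrow> c < t (Suc K)"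
begin

lemma insert_node_less_node: "m \<in> {1..K} \<Longrightarrow> insert_node K c t m < c"
  using below strict_mono_on_leD[OF mono, of m K] \<open>K \<le> N\<close> by (force simp: insert_node_def)

lemma insert_node_greater_node: "m \<in> {K + 2..Suc N} \<Longrightarrow> c < insert_node K c t m"
  using above strict_mono_on_leD[OF mono, of "Suc K" "m - 1"] by (force simp: insert_node_def)

lemma strict_mono_on_insert_node: "strict_mono_on {1..Suc N} (insert_node K c t)"
proof (rule strict_mono_onI)
  fix p q assume p: "p \<in> {1..Suc N}" and q: "q \<in> {1..Suc N}" and "p < q"
  consider "q \<le> K" | "p \<le> K" "q = Suc K" | "p \<le> Suc K" "Suc K < q" | "Suc K < p"
    using \<open>p < q\<close> by linarith
  then show "insert_node K c t p < insert_node K c t q"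
  proof cases
    case 1
    then show ?thesis
      using p \<open>p < q\<close> \<open>K \<le> N\<close> strict_mono_onD[OF mono, of p q] by (simp add: insert_node_def)
  next
    case 2
    then show ?thesis
      using insert_node_less_node[of p] p by (simp add: insert_node_def)
  next
    case 3
    then have "insert_node K c t p \<le> c"
      using insert_node_less_node[of p] p by (cases "p = Suc K") (auto simp: insert_node_def)
    then show ?thesis
      using insert_node_greater_node[of q] q 3 by simp
  next
    case 4
    then show ?thesis
      using p q \<open>p < q\<close> strict_mono_onD[OF mono, of "p - 1" "q - 1"] by (simp add: insert_node_def)
  qed
qed

lemma gap_insert_node:
  assumes "j \<le> Suc N" "x \<in> gap (insert_node K c t) (Suc N) j"
  shows "j \<le> K \<and> x \<in> gap t N j \<and> x < c \<or> K < j \<and> x \<in> gap t N (j - 1) \<and> c < x"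
proof (cases "j \<le> K")
  case True
  have "x < insert_node K c t (Suc j)"
    using assms True \<open>K \<le> N\<close> by (auto simp: gap_def)
  moreover have "insert_node K c t (Suc j) \<le> c"
    using insert_node_less_node[of "Suc j"] True by (cases "j = K") (auto simp: insert_node_def)
  moreover have "j = N \<or> x < t (Suc j)"
  proof (cases "j = K")
    case True
    then show ?thesis
      using assms(2) above \<open>K \<le> N\<close> by (cases "K < N") (auto simp: gap_def insert_node_def)
  next
    case False
    then show ?thesis
      using assms \<open>j \<le> K\<close> \<open>K \<le> N\<close> by (auto simp: gap_def insert_node_def)
  qed
  ultimately show ?thesis
    using assms True \<open>K \<le> N\<close> by (auto simp: gap_def insert_node_def)
next
  case False
  have "insert_node K c t j < x"
    using assms False by (auto simp: gap_def)
  moreover have "c \<le> insert_node K c t j"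
    using insert_node_greater_node[of j] False assms(1) by (cases "j = Suc K") (auto simp: insert_node_def)
  ultimately have "c < x"
    by simp
  moreover have "j - 1 = 0 \<or> t (j - 1) < x"
  proof (cases "j = Suc K")
    case True
    then show ?thesis
      using below \<open>c < x\<close> by (cases "K = 0") auto
  next
    case False
    then show ?thesis
      using assms \<open>\<not> j \<le> K\<close> by (auto simp: gap_def insert_node_def)
  qed
  moreover have "j - 1 = N \<or> x < t j"
    using assms False by (auto simp: gap_def insert_node_def)
  ultimately show ?thesis
    using False by (simp add: gap_def)
qed

end

lemma sum_insert_node:
  assumes "K \<le> N"
  shows "(\<Sum>m=1..Suc N. f m (insert_node K c t m))
           = (\<Sum>m=1..K. f m (t m)) + f (Suc K) c + (\<Sum>m=Suc K..N. f (Suc m) (t m))"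
proof -
  have "(\<Sum>m=1..Suc N. f m (insert_node K c t m))
      = (\<Sum>m=1..K. f m (insert_node K c t m)) + (\<Sum>m=Suc K..Suc N. f m (insert_node K c t m))"
    using sum.ub_add_nat[of 1 K _ "Suc N - K"] assms by simp
  also have "(\<Sum>m=1..K. f m (insert_node K c t m)) = (\<Sum>m=1..K. f m (t m))"
    by (intro sum.cong) (auto simp: insert_node_def)
  also have "(\<Sum>m=Suc K..Suc N. f m (insert_node K c t m))
      = f (Suc K) c + (\<Sum>m=Suc (Suc K)..Suc N. f m (insert_node K c t m))"
    using sum.atLeast_Suc_atMost[of "Suc K" "Suc N" "\<lambda>m. f m (insert_node K c t m)"] assms
    by (simp add: insert_node_def del: sum.cl_ivl_Suc)
  also have "(\<Sum>m=Suc (Suc K)..Suc N. f m (insert_node K c t m)) = (\<Sum>m=Suc K..N. f (Suc m) (t m))"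
    unfolding sum.shift_bounds_cl_Suc_ivl by (intro sum.cong) (auto simp: insert_node_def)
  finally show ?thesis
    by (simp only: add.assoc)
qed

section \<open>Integrating an absolute value across sign changes\<close>

lemma set_integral_gap:
  fixes f F :: "real \<Rightarrow> real" and s :: "nat \<Rightarrow> real"
  assumes mono: "strict_mono_on {1..N} s" and "j \<le> N"
    and F: "\<And>x. (F has_real_derivative f x) (at x)" and f: "\<And>x. isCont f x"
    and top: "(F \<longlongrightarrow> 0) at_top" and bot: "(F \<longlongrightarrow> 0) at_bot"
    and nonneg: "\<And>x. x \<in> gap s N j \<Longrightarrow> 0 \<le> c * f x"
  shows "set_integrable lborel (gap s N j) (\<lambda>x. c * f x)"
    and "(LINT x:gap s N j|lborel. c * f x)
           = c * ((if j = N then 0 else F (s (Suc j))) - (if j = 0 then 0 else F (s j)))"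
proof -
  define a b where "a = (if j = 0 then -\<infinity> else ereal (s j))"
    and "b = (if j = N then \<infinity> else ereal (s (Suc j)))"
  have gap: "gap s N j = einterval a b"
    by (simp add: gap_eq_einterval a_def b_def)
  have "a < b"
    using strict_mono_onD[OF mono, of j "Suc j"] assms(2) by (auto simp: a_def b_def)
  have "isCont F x" for x
    using F DERIV_isCont by blast
  then have lim_F: "(F \<longlongrightarrow> F x) (at_right x)" "(F \<longlongrightarrow> F x) (at_left x)" for x
    by (auto simp: isCont_def filterlim_at_split)
  have "((F \<circ> real_of_ereal) \<longlongrightarrow> (if j = 0 then 0 else F (s j))) (at_right a)"
    using bot lim_F(1) by (simp add: a_def ereal_tendsto_simps1)
  then have A: "(((\<lambda>x. c * F x) \<circ> real_of_ereal) \<longlongrightarrow> c * (if j = 0 then 0 else F (s j))) (at_right a)"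
    unfolding comp_def by (rule tendsto_mult_left)
  have "((F \<circ> real_of_ereal) \<longlongrightarrow> (if j = N then 0 else F (s (Suc j)))) (at_left b)"
    using top lim_F(2) by (simp add: b_def ereal_tendsto_simps1)
  then have B: "(((\<lambda>x. c * F x) \<circ> real_of_ereal) \<longlongrightarrow> c * (if j = N then 0 else F (s (Suc j)))) (at_left b)"
    unfolding comp_def by (rule tendsto_mult_left)
  have "AE x in lborel. a < ereal x \<longrightarrow> ereal x < b \<longrightarrow> 0 \<le> c * f x"
    using nonneg by (simp add: gap einterval_def)
  note FTC = interval_integral_FTC_nonneg[OF \<open>a < b\<close> DERIV_cmult[OF F] isCont_mult[OF continuous_const f] this A B]
  show "set_integrable lborel (gap s N j) (\<lambda>x. c * f x)"
    using FTC(1) by (simp add: gap)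
  show "(LINT x:gap s N j|lborel. c * f x)
           = c * ((if j = N then 0 else F (s (Suc j))) - (if j = 0 then 0 else F (s j)))"
    using FTC(2) \<open>a < b\<close> unfolding gap interval_lebesgue_integral_def right_diff_distrib
    by (simp only: if_P less_imp_le)
qed

lemma sum_indicator_gap:
  fixes g :: "nat \<Rightarrow> real"
  assumes mono: "strict_mono_on {1..N} s" and "x \<notin> s ` {1..N}" "J \<le> N" "x \<in> gap s N J"
  shows "(\<Sum>j=0..N. indicator (gap s N j) x *\<^sub>R g j) = g J"
proof -
  have "x \<notin> gap s N j" if "j \<le> N" "j \<noteq> J" for j
    using ex1_gap[OF assms(1,2)] assms(3,4) that by blast
  then have "(\<Sum>j=0..N. indicator (gap s N j) x *\<^sub>R g j) = (\<Sum>j=0..N. if j = J then g j else 0)"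
    using assms(4) by (intro sum.cong) auto
  then show ?thesis
    using assms(3) by simp
qed

lemma integral_sum_gaps:
  fixes f F :: "real \<Rightarrow> real" and s \<epsilon> :: "nat \<Rightarrow> real"
  assumes mono: "strict_mono_on {1..N} s"
    and F: "\<And>x. (F has_real_derivative f x) (at x)" and f: "\<And>x. isCont f x"
    and top: "(F \<longlongrightarrow> 0) at_top" and bot: "(F \<longlongrightarrow> 0) at_bot"
    and sign: "\<And>j x. j \<le> N \<Longrightarrow> x \<in> gap s N j \<Longrightarrow> 0 \<le> \<epsilon> j * f x"
  shows "integrable lborel (\<lambda>x. \<Sum>j=0..N. indicator (gap s N j) x *\<^sub>R (\<epsilon> j * f x))"
    and "(\<integral>x. (\<Sum>j=0..N. indicator (gap s N j) x *\<^sub>R (\<epsilon> j * f x)) \<partial>lborel)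
           = (\<Sum>m=1..N. (\<epsilon> (m - 1) - \<epsilon> m) * F (s m))"
proof -
  define v where "v m = (if m = 0 \<or> m = Suc N then 0 else F (s m))" for m
  have piece: "set_integrable lborel (gap s N j) (\<lambda>x. \<epsilon> j * f x)"
    "(LINT x:gap s N j|lborel. \<epsilon> j * f x) = \<epsilon> j * (v (Suc j) - v j)" if "j \<le> N" for j
    using set_integral_gap[OF mono that F f top bot sign[OF that]] that by (auto simp: v_def)
  show "integrable lborel (\<lambda>x. \<Sum>j=0..N. indicator (gap s N j) x *\<^sub>R (\<epsilon> j * f x))"
    by (intro Bochner_Integration.integrable_sum) (use piece(1) in \<open>simp add: set_integrable_def\<close>)
  have "(\<integral>x. (\<Sum>j=0..N. indicator (gap s N j) x *\<^sub>R (\<epsilon> j * f x)) \<partial>lborel)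
      = (\<Sum>j=0..N. (LINT x:gap s N j|lborel. \<epsilon> j * f x))"
    unfolding set_lebesgue_integral_def
    by (rule Bochner_Integration.integral_sum) (use piece(1) in \<open>simp add: set_integrable_def\<close>)
  also have "\<dots> = (\<Sum>j=0..N. \<epsilon> j * (v (Suc j) - v j))"
    by (rule sum.cong[OF refl]) (rule piece(2), simp)
  also have "\<dots> = (\<Sum>m=1..N. (\<epsilon> (m - 1) - \<epsilon> m) * v m)"
    unfolding sum_mult_diff_by_parts by (simp add: v_def)
  also have "\<dots> = (\<Sum>m=1..N. (\<epsilon> (m - 1) - \<epsilon> m) * F (s m))"
    by (intro sum.cong) (auto simp: v_def)
  finally show "(\<integral>x. (\<Sum>j=0..N. indicator (gap s N j) x *\<^sub>R (\<epsilon> j * f x)) \<partial>lborel)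
      = (\<Sum>m=1..N. (\<epsilon> (m - 1) - \<epsilon> m) * F (s m))" .
qed

lemma integral_abs_eq_sum_jumps:
  fixes f F :: "real \<Rightarrow> real" and s \<epsilon> :: "nat \<Rightarrow> real"
  assumes mono: "strict_mono_on {1..N} s"
    and F: "\<And>x. (F has_real_derivative f x) (at x)" and f: "\<And>x. isCont f x"
    and top: "(F \<longlongrightarrow> 0) at_top" and bot: "(F \<longlongrightarrow> 0) at_bot"
    and sign: "\<And>j x. j \<le> N \<Longrightarrow> x \<in> gap s N j \<Longrightarrow> 0 \<le> \<epsilon> j * f x"
    and unit: "\<And>j. j \<le> N \<Longrightarrow> \<bar>\<epsilon> j\<bar> = 1"
  shows "integrable lborel (\<lambda>x. \<bar>f x\<bar>)"
    and "(\<integral>x. \<bar>f x\<bar> \<partial>lborel) = (\<Sum>m=1..N. (\<epsilon> (m - 1) - \<epsilon> m) * F (s m))"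
proof -
  define h where "h x = (\<Sum>j=0..N. indicator (gap s N j) x *\<^sub>R (\<epsilon> j * f x))" for x
  have h_integrable: "integrable lborel h"
    using sign unfolding h_def[abs_def] by (rule integral_sum_gaps(1)[OF mono F f top bot])
  have h_integral: "integral\<^sup>L lborel h = (\<Sum>m=1..N. (\<epsilon> (m - 1) - \<epsilon> m) * F (s m))"
    using sign unfolding h_def[abs_def] by (rule integral_sum_gaps(2)[OF mono F f top bot])
  have "AE x in lborel. x \<notin> s ` {1..N}"
    by (intro AE_not_in finite_imp_null_set_lborel) simp
  then have ae: "AE x in lborel. h x = \<bar>f x\<bar>"
  proof (rule AE_mp, intro AE_I2 impI)
    fix x assume x: "x \<notin> s ` {1..N}"
    then obtain J where J: "J \<le> N" "x \<in> gap s N J"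
      using ex1_gap[OF mono] by blast
    have "h x = \<epsilon> J * f x"
      unfolding h_def by (rule sum_indicator_gap[OF mono x J])
    also have "\<dots> = \<bar>\<epsilon> J * f x\<bar>"
      using sign[OF J] by simp
    also have "\<dots> = \<bar>f x\<bar>"
      using unit[OF J(1)] by (simp add: abs_mult)
    finally show "h x = \<bar>f x\<bar>" .
  qed
  have "continuous_on UNIV (\<lambda>x. \<bar>f x\<bar>)"
    using f by (intro continuous_at_imp_continuous_on continuous_intros) auto
  then have "(\<lambda>x. \<bar>f x\<bar>) \<in> borel_measurable lborel"
    by (simp add: borel_measurable_continuous_onI)
  note cong = integrable_cong_AE[OF borel_measurable_integrable[OF h_integrable] this ae]
    integral_cong_AE[OF borel_measurable_integrable[OF h_integrable] this ae]
  show "integrable lborel (\<lambda>x. \<bar>f x\<bar>)"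
    using cong(1) h_integrable by simp
  show "(\<integral>x. \<bar>f x\<bar> \<partial>lborel) = (\<Sum>m=1..N. (\<epsilon> (m - 1) - \<epsilon> m) * F (s m))"
    using cong(2) h_integral by simp
qed

section \<open>Hermite polynomials and Hermite functions\<close>

fun hermite_poly :: "nat \<Rightarrow> real poly" where
  "hermite_poly 0 = 1"
| "hermite_poly (Suc n) = [:0, 2:] * hermite_poly n - pderiv (hermite_poly n)"

lemma has_real_derivative_gauss_mult_poly:
  "((\<lambda>x. exp (- (x\<^sup>2)) * poly p x) has_real_derivative
     exp (- (x\<^sup>2)) * (poly (pderiv p) x - 2 * x * poly p x)) (at x)"
  by (auto intro!: derivative_eq_intros poly_DERIV simp: algebra_simps)

lemma higher_deriv_gauss:
  "(deriv ^^ n) (\<lambda>x. exp (- (x\<^sup>2))) = (\<lambda>x. (-1) ^ n * exp (- (x\<^sup>2)) * poly (hermite_poly n) x)"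
proof (induction n)
  case 0
  then show ?case by simp
next
  case (Suc n)
  have "deriv (\<lambda>x. (-1) ^ n * exp (- (x\<^sup>2)) * poly (hermite_poly n) x) x
      = (-1) ^ Suc n * exp (- (x\<^sup>2)) * poly (hermite_poly (Suc n)) x" for x
    using DERIV_imp_deriv[OF DERIV_cmult[OF has_real_derivative_gauss_mult_poly, of "(-1) ^ n"]]
    by (simp add: algebra_simps)
  then show ?case using Suc by auto
qed

lemma hermite_eq_poly: "hermite n x = poly (hermite_poly n) x"
  unfolding hermite_def higher_deriv_gauss
  by (simp add: exp_minus field_simps power_mult_distrib[symmetric] flip: power_mult)

lemma hermite_fun_eq_poly:
  "hermite_fun m x = exp (- (x\<^sup>2)) * poly (hermite_poly m) x / (2 ^ m * fact m * sqrt pi)"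
  unfolding hermite_fun_def hermite_eq_poly ..

lemma degree_lead_coeff_hermite_poly:
  "degree (hermite_poly n) = n \<and> lead_coeff (hermite_poly n) = 2 ^ n"
proof (induction n)
  case 0
  then show ?case by simp
next
  case (Suc n)
  have X: "[:0, 2:] * p = pCons 0 (smult 2 p)" for p :: "real poly"
    by (simp add: mult_pCons_left)
  have "coeff (hermite_poly n) n = 2 ^ n"
    using Suc.IH by auto
  then have "coeff (hermite_poly (Suc n)) (Suc n) = 2 ^ Suc n"
    using Suc by (simp add: X coeff_pderiv coeff_eq_0)
  moreover have "degree (hermite_poly (Suc n)) \<le> Suc n"
    using Suc by (auto simp: X degree_pderiv intro!: degree_diff_le)
  ultimately show ?case
    by (metis le_antisym le_degree power_not_zero zero_neq_numeral)
qed

lemma coeff_hermite_poly_eq_0: "odd (n + k) \<Longrightarrow> coeff (hermite_poly n) k = 0"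
proof (induction n arbitrary: k)
  case 0
  then show ?case by (cases k) auto
next
  case (Suc n)
  then show ?case by (cases k) (auto simp: mult_pCons_left coeff_pderiv)
qed

lemma poly_hermite_poly_minus: "poly (hermite_poly n) (- x) = (-1) ^ n * poly (hermite_poly n) x"
proof -
  have "coeff (hermite_poly n) k * (- x) ^ k = (-1) ^ n * (coeff (hermite_poly n) k * x ^ k)" for k
    by (cases "odd (n + k)")
       (auto simp: coeff_hermite_poly_eq_0 power_minus[of x k] elim!: oddE evenE simp: power_add)
  then show ?thesis unfolding poly_altdef sum_distrib_left by (intro sum.cong) auto
qed

lemma hermite_minus: "hermite n (- x) = (-1) ^ n * hermite n x"
  by (simp add: hermite_eq_poly poly_hermite_poly_minus)

lemma hermite_fun_has_real_derivative:
  "(hermite_fun m has_real_derivative - 2 * real (Suc m) * hermite_fun (Suc m) x) (at x)"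
proof -
  have "fact (Suc m) = real (Suc m) * fact m" "sqrt pi > 0"
    by simp_all
  then have eq: "exp (- (x\<^sup>2)) * (poly (pderiv (hermite_poly m)) x - 2 * x * poly (hermite_poly m) x)
        / (2 ^ m * fact m * sqrt pi) = - 2 * real (Suc m) * hermite_fun (Suc m) x"
    unfolding hermite_fun_eq_poly by (simp add: field_simps del: of_nat_Suc)
  have fun_eq: "hermite_fun m = (\<lambda>x. exp (- (x\<^sup>2)) * poly (hermite_poly m) x / (2 ^ m * fact m * sqrt pi))"
    by (simp add: fun_eq_iff hermite_fun_eq_poly)
  show ?thesis
    unfolding fun_eq by (rule DERIV_cong[OF DERIV_cdivide[OF has_real_derivative_gauss_mult_poly] eq])
qed

lemma isCont_hermite_fun: "isCont (hermite_fun m) x"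
  using hermite_fun_has_real_derivative DERIV_isCont by blast

lemma tendsto_poly_mult_gauss_at_infinity:
  fixes p :: "real poly"
  shows "((\<lambda>x. poly p x * exp (- (x\<^sup>2))) \<longlongrightarrow> 0) at_infinity"
proof -
  have monomial: "((\<lambda>x::real. x ^ k * exp (- (x\<^sup>2))) \<longlongrightarrow> 0) at_infinity" for k
    unfolding at_infinity_eq_at_top_bot by (rule filterlim_sup) real_asymp+
  have "((\<lambda>x. \<Sum>k\<le>degree p. coeff p k * (x ^ k * exp (- (x\<^sup>2)))) \<longlongrightarrow> 0) at_infinity"
    by (intro tendsto_null_sum tendsto_mult_right_zero monomial)
  then show ?thesis by (simp add: poly_altdef sum_distrib_right mult.assoc)
qed

lemma tendsto_power_mult_hermite_fun_at_infinity:
  "((\<lambda>x. x ^ j * hermite_fun m x) \<longlongrightarrow> 0) at_infinity"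
proof -
  have "((\<lambda>x. poly (monom 1 j * hermite_poly m) x * exp (- (x\<^sup>2)) / (2 ^ m * fact m * sqrt pi))
      \<longlongrightarrow> 0) at_infinity"
    using tendsto_divide_zero[OF tendsto_poly_mult_gauss_at_infinity] .
  then show ?thesis by (simp add: hermite_fun_eq_poly poly_monom mult_ac)
qed

section \<open>An antiderivative of the moment integrand\<close>

text \<open>Setting the
  terms with \<open>k > i\<close> to zero makes the derivatives of consecutive terms telescope.\<close>

definition hermite_moment_term :: "nat \<Rightarrow> nat \<Rightarrow> nat \<Rightarrow> real \<Rightarrow> real" where
  "hermite_moment_term m i k x =
     (if k \<le> i then fact (m - k) / (2 ^ k * fact (i - k)) * x ^ (i - k) * hermite_fun (m - k) x else 0)"

lemma inner_term_eq_sum: "inner_term n i x = (\<Sum>k=0..i. hermite_moment_term (n - 1) i k x)"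
  unfolding inner_term_def hermite_moment_term_def by (simp add: diff_diff_add)

lemma hermite_moment_term_has_real_derivative:
  assumes "k \<le> i" "k \<le> m"
  shows "(hermite_moment_term m i k has_real_derivative
           2 * (hermite_moment_term (Suc m) i (Suc k) x - hermite_moment_term (Suc m) i k x)) (at x)"
proof -
  define a b where "a = i - k" and "b = m - k"
  define c :: real where "c = fact b / (2 ^ k * fact a)"
  have fun_eq: "hermite_moment_term m i k = (\<lambda>x. c * x ^ a * hermite_fun b x)"
    using assms by (simp add: fun_eq_iff hermite_moment_term_def c_def a_def b_def)
  have deriv: "((\<lambda>x. c * x ^ a * hermite_fun b x) has_real_derivative
      c * (real a * x ^ (a - 1)) * hermite_fun b x
      + c * x ^ a * (- 2 * real (Suc b) * hermite_fun (Suc b) x)) (at x)"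
    by (rule DERIV_cong[OF DERIV_mult[OF DERIV_cmult[OF DERIV_pow] hermite_fun_has_real_derivative]])
       (simp add: algebra_simps)
  have first: "c * (real a * x ^ (a - 1)) * hermite_fun b x = 2 * hermite_moment_term (Suc m) i (Suc k) x"
  proof (cases a)
    case (Suc a')
    then have "i - Suc k = a'" "Suc m - Suc k = b" "Suc k \<le> i"
      using assms by (auto simp: a_def b_def)
    then show ?thesis
      unfolding hermite_moment_term_def c_def Suc by (simp add: field_simps del: of_nat_Suc)
  qed (use assms in \<open>simp add: hermite_moment_term_def a_def\<close>)
  have "Suc m - k = Suc b"
    using assms by (simp add: b_def)
  then have second: "c * x ^ a * (- 2 * real (Suc b) * hermite_fun (Suc b) x) = - 2 * hermite_moment_term (Suc m) i k x"
    using assms unfolding hermite_moment_term_def c_def a_def by (simp add: field_simps del: of_nat_Suc)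
  show ?thesis
    unfolding fun_eq by (rule DERIV_cong[OF deriv]) (simp only: first second right_diff_distrib)
qed

lemma inner_term_has_real_derivative:
  assumes "i < n"
  shows "(inner_term n i has_real_derivative - 2 * fact n * (x ^ i / fact i * hermite_fun n x)) (at x)"
proof -
  have "((\<lambda>x. \<Sum>k=0..i. hermite_moment_term (n - 1) i k x) has_real_derivative
      (\<Sum>k=0..i. 2 * (hermite_moment_term n i (Suc k) x - hermite_moment_term n i k x))) (at x)"
    using hermite_moment_term_has_real_derivative[of _ i "n - 1"] assms
    by (intro DERIV_sum) (simp add: Suc_pred')
  also have "(\<Sum>k=0..i. 2 * (hermite_moment_term n i (Suc k) x - hermite_moment_term n i k x))
      = 2 * (hermite_moment_term n i (Suc i) x - hermite_moment_term n i 0 x)"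
    unfolding sum_distrib_left[symmetric] by (subst sum_Suc_diff) simp_all
  finally show ?thesis
    unfolding inner_term_eq_sum[abs_def] by (simp add: hermite_moment_term_def mult.assoc)
qed

lemma tendsto_inner_term_at_infinity: "(inner_term n i \<longlongrightarrow> 0) at_infinity"
  unfolding inner_term_def[abs_def]
  by (intro tendsto_null_sum)
     (simp only: mult.assoc, intro tendsto_mult_right_zero tendsto_power_mult_hermite_fun_at_infinity)

lemma inner_term_at_0:
  "i \<le> n - 1 \<Longrightarrow> inner_term n i 0 = fact (n - 1 - i) / 2 ^ i * hermite_fun (n - 1 - i) 0"
proof -
  have "inner_term n i 0 = (\<Sum>k=0..i. if k = i then fact (n - 1 - i) / 2 ^ i * hermite_fun (n - 1 - i) 0 else 0)"
    unfolding inner_term_def by (intro sum.cong) (auto simp: power_0_left)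
  then show ?thesis by simp
qed

section \<open>Zeros of Hermite polynomials\<close>

lemma poly_hermite_poly_eq_prod_zeros:
  assumes "strict_mono_on {1..n} t" "{x. hermite n x = 0} = t ` {1..n}"
  shows "poly (hermite_poly n) x = 2 ^ n * (\<Prod>m=1..n. x - t m)"
proof -
  have inj: "inj_on t {1..n}"
    using assms(1) by (rule strict_mono_on_imp_inj_on)
  have "hermite_poly n \<noteq> 0"
    using degree_lead_coeff_hermite_poly[of n] by auto
  moreover have "poly (hermite_poly n) a = 0" if "a \<in> t ` {1..n}" for a
  proof -
    have "a \<in> {x. hermite n x = 0}"
      using that assms(2) by simp
    then show ?thesis
      by (simp add: hermite_eq_poly)
  qed
  ultimately have "poly (hermite_poly n) x = 2 ^ n * (\<Prod>a\<in>t ` {1..n}. x - a)"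
    using poly_eq_lead_coeff_prod_roots[of "t ` {1..n}" "hermite_poly n" x]
      degree_lead_coeff_hermite_poly[of n] card_image[OF inj]
    by auto
  then show ?thesis
    using prod.reindex[OF inj, of "\<lambda>a. x - a"] by simp
qed

lemma hermite_fun_sign_on_gap:
  assumes mono: "strict_mono_on {1..n} t" and zeros: "{x. hermite n x = 0} = t ` {1..n}"
    and "j \<le> n" "x \<in> gap t n j"
  shows "0 < (-1) ^ (n - j) * hermite_fun n x"
proof -
  have left: "0 < (\<Prod>m=1..j. x - t m)"
  proof (rule prod_pos)
    fix m assume "m \<in> {1..j}"
    then show "0 < x - t m"
      using assms(3,4) strict_mono_on_leD[OF mono, of m j] by (auto simp: gap_def)
  qed
  have "0 < (\<Prod>m=Suc j..n. t m - x)"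
  proof (rule prod_pos)
    fix m assume "m \<in> {Suc j..n}"
    then show "0 < t m - x"
      using assms(3,4) strict_mono_on_leD[OF mono, of "Suc j" m] by (auto simp: gap_def)
  qed
  also have "(\<Prod>m=Suc j..n. t m - x) = (-1) ^ (n - j) * (\<Prod>m=Suc j..n. x - t m)"
    using prod_uminus[of "\<lambda>m. x - t m" "{Suc j..n}"] by simp
  finally have right: "0 < (-1) ^ (n - j) * (\<Prod>m=Suc j..n. x - t m)" .
  have "(\<Prod>m=1..n. x - t m) = (\<Prod>m=1..j. x - t m) * (\<Prod>m=Suc j..n. x - t m)"
    using prod.ub_add_nat[of 1 j "\<lambda>m. x - t m" "n - j"] assms(3) by simp
  then have "(-1) ^ (n - j) * hermite_fun n x
      = exp (- (x\<^sup>2)) / (fact n * sqrt pi) * ((\<Prod>m=1..j. x - t m) * ((-1) ^ (n - j) * (\<Prod>m=Suc j..n. x - t m)))"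
    unfolding hermite_fun_eq_poly poly_hermite_poly_eq_prod_zeros[OF mono zeros] by (simp add: field_simps)
  also have "0 < \<dots>"
    by (rule mult_pos_pos) (simp, rule mult_pos_pos[OF left right])
  finally show ?thesis .
qed

lemma hermite_zero_counts:
  assumes mono: "strict_mono_on {1..n} t" and zeros: "{x. hermite n x = 0} = t ` {1..n}"
  shows "card {m\<in>{1..n}. t m < 0} = n div 2" and "0 \<in> t ` {1..n} \<longleftrightarrow> odd n"
proof -
  define c where "c = card {m\<in>{1..n}. t m < 0}"
  have inj: "inj_on t {1..n}"
    using mono by (rule strict_mono_on_imp_inj_on)
  have "- x \<in> t ` {1..n}" if "x \<in> t ` {1..n}" for x
    using that unfolding zeros[symmetric] by (simp add: hermite_minus)
  then have "card (t ` {1..n}) = 2 * card {x\<in>t ` {1..n}. x < 0} + (if 0 \<in> t ` {1..n} then 1 else 0)"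
    by (intro card_eq_twice_card_negative) auto
  moreover have "{x\<in>t ` {1..n}. x < 0} = t ` {m\<in>{1..n}. t m < 0}"
    by auto
  moreover have "card (t ` {m\<in>{1..n}. t m < 0}) = card {m\<in>{1..n}. t m < 0}"
    using inj by (intro card_image) (auto intro: inj_on_subset)
  ultimately have "n = 2 * c + (if 0 \<in> t ` {1..n} then 1 else 0)"
    using card_image[OF inj] by (simp add: c_def)
  then show "c = n div 2" and "0 \<in> t ` {1..n} \<longleftrightarrow> odd n"
    by (cases "0 \<in> t ` {1..n}"; simp)+
qed

lemma hermite_zero_negative_iff:
  assumes "strict_mono_on {1..n} t" "{x. hermite n x = 0} = t ` {1..n}" "m \<in> {1..n}"
  shows "t m < 0 \<longleftrightarrow> m \<le> n div 2"
  using strict_mono_on_less_iff_le_card[OF assms(1,3)] hermite_zero_counts(1)[OF assms(1,2)] by simp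

lemma hermite_zero_middle:
  assumes mono: "strict_mono_on {1..n} t" and zeros: "{x. hermite n x = 0} = t ` {1..n}"
    and "odd n"
  shows "t (Suc (n div 2)) = 0"
proof -
  obtain m where m: "m \<in> {1..n}" "t m = 0"
    using hermite_zero_counts(2)[OF mono zeros] \<open>odd n\<close> by auto
  then have "n div 2 < m"
    using hermite_zero_negative_iff[OF mono zeros m(1)] by simp
  moreover have "\<not> Suc (n div 2) < m"
    using strict_mono_onD[OF mono, of "Suc (n div 2)" m] hermite_zero_negative_iff[OF mono zeros] m
    by fastforce
  ultimately show ?thesis
    using m by (metis Suc_lessI)
qed

lemma hermite_zero_nonzero:
  assumes "strict_mono_on {1..n} t" "{x. hermite n x = 0} = t ` {1..n}" "even n" "m \<in> {1..n}"
  shows "t m \<noteq> 0"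
  using hermite_zero_counts(2)[OF assms(1,2)] assms(3,4) by auto

section \<open>Absolute moments of Hermite functions\<close>

lemma hermite_moment_sign_on_gap:
  assumes "strict_mono_on {1..n} t" "{x. hermite n x = 0} = t ` {1..n}" "j \<le> n" "x \<in> gap t n j"
    and "0 \<le> \<sigma> * x ^ i"
  shows "0 \<le> \<sigma> * (-1) ^ (n + j) * (x ^ i * hermite_fun n x)"
proof -
  have "0 < (-1) ^ (n + j) * hermite_fun n x"
    using hermite_fun_sign_on_gap[OF assms(1-4)] unfolding minus_one_power_diff[OF assms(3)] .
  then show ?thesis
    using mult_sign_nonneg[OF _ assms(5)] by (simp add: mult.assoc)
qed

lemma integral_abs_hermite_moment:
  fixes s \<sigma> :: "nat \<Rightarrow> real"
  assumes "i < n" and mono: "strict_mono_on {1..N} s"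
    and sign: "\<And>j x. j \<le> N \<Longrightarrow> x \<in> gap s N j \<Longrightarrow> 0 \<le> \<sigma> j * (-1) ^ (n + j) * (x ^ i * hermite_fun n x)"
    and unit: "\<And>j. j \<le> N \<Longrightarrow> \<bar>\<sigma> j\<bar> = 1"
  shows "integrable lborel (\<lambda>x. \<bar>x ^ i / fact i * hermite_fun n x\<bar>)"
    and "(\<integral>x. \<bar>x ^ i / fact i * hermite_fun n x\<bar> \<partial>lborel)
           = 1 / fact n * (\<Sum>m=1..N. (\<sigma> m + \<sigma> (m - 1)) / 2 * (-1) ^ (n + m) * inner_term n i (s m))"
proof -
  define F where "F x = - inner_term n i x / (2 * fact n)" for x
  have F: "(F has_real_derivative x ^ i / fact i * hermite_fun n x) (at x)" for x
    using DERIV_cdivide[OF DERIV_minus[OF inner_term_has_real_derivative[OF \<open>i < n\<close>]], of "2 * fact n"]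
    by (simp add: F_def[abs_def])
  have cont: "isCont (\<lambda>x. x ^ i / fact i * hermite_fun n x) x" for x
    by (intro continuous_intros isCont_hermite_fun) simp
  have "(F \<longlongrightarrow> 0) at_infinity"
    unfolding F_def[abs_def] using tendsto_inner_term_at_infinity
    by (intro tendsto_divide_zero tendsto_minus_cancel_left[THEN iffD1]) simp
  then have top: "(F \<longlongrightarrow> 0) at_top" and bot: "(F \<longlongrightarrow> 0) at_bot"
    by (auto intro: tendsto_mono at_top_le_at_infinity at_bot_le_at_infinity)
  define \<epsilon> where "\<epsilon> j = \<sigma> j * (-1) ^ (n + j)" for j
  have sign': "0 \<le> \<epsilon> j * (x ^ i / fact i * hermite_fun n x)" if "j \<le> N" "x \<in> gap s N j" for j x
    using divide_nonneg_pos[OF sign[OF that], of "fact i"] by (simp add: \<epsilon>_def)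
  have unit': "\<bar>\<epsilon> j\<bar> = 1" if "j \<le> N" for j
    using unit[OF that] by (simp add: \<epsilon>_def abs_mult)
  show "integrable lborel (\<lambda>x. \<bar>x ^ i / fact i * hermite_fun n x\<bar>)"
    using sign' unit' by (rule integral_abs_eq_sum_jumps(1)[OF mono F cont top bot])
  have "(\<integral>x. \<bar>x ^ i / fact i * hermite_fun n x\<bar> \<partial>lborel) = (\<Sum>m=1..N. (\<epsilon> (m - 1) - \<epsilon> m) * F (s m))"
    using sign' unit' by (rule integral_abs_eq_sum_jumps(2)[OF mono F cont top bot])
  also have "\<dots> = 1 / fact n * (\<Sum>m=1..N. (\<sigma> m + \<sigma> (m - 1)) / 2 * (-1) ^ (n + m) * inner_term n i (s m))"
    unfolding sum_distrib_left
  proof (intro sum.cong refl)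
    fix m assume "m \<in> {1..N}"
    then have "\<epsilon> (m - 1) = - \<sigma> (m - 1) * (-1) ^ (n + m)"
      unfolding \<epsilon>_def using minus_one_power_pred[of m n, where 'a = real] by simp
    then show "(\<epsilon> (m - 1) - \<epsilon> m) * F (s m)
        = 1 / fact n * ((\<sigma> m + \<sigma> (m - 1)) / 2 * (-1) ^ (n + m) * inner_term n i (s m))"
      by (simp add: \<epsilon>_def F_def field_simps)
  qed
  finally show "(\<integral>x. \<bar>x ^ i / fact i * hermite_fun n x\<bar> \<partial>lborel)
           = 1 / fact n * (\<Sum>m=1..N. (\<sigma> m + \<sigma> (m - 1)) / 2 * (-1) ^ (n + m) * inner_term n i (s m))" .
qed

lemma odd_moment_sign_on_gap_middle_zero:
  assumes mono: "strict_mono_on {1..n} t" and zeros: "{x. hermite n x = 0} = t ` {1..n}"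
    and "odd i" and middle: "t (Suc K) = 0"
    and "j \<le> n" "x \<in> gap t n j" "Suc K \<le> n"
  shows "0 \<le> (if j \<le> K then -1 else 1) * (-1) ^ (n + j) * (x ^ i * hermite_fun n x)"
proof (rule hermite_moment_sign_on_gap[OF mono zeros assms(5,6)])
  show "0 \<le> (if j \<le> K then -1 else 1) * x ^ i"
  proof (cases "j \<le> K")
    case True
    then have "x < t (Suc j)" "t (Suc j) \<le> t (Suc K)"
      using assms(5-7) by (auto simp: gap_def intro!: strict_mono_on_leD[OF mono])
    then show ?thesis
      using True middle \<open>odd i\<close> by (simp add: power_less_zero_eq less_imp_le)
  next
    case False
    then have "t (Suc K) \<le> t j" "t j < x"
      using assms(5,6) by (auto simp: gap_def intro!: strict_mono_on_leD[OF mono])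
    then show ?thesis
      using False middle by simp
  qed
qed

lemma odd_moment_sign_on_gap_insert_zero:
  assumes mono: "strict_mono_on {1..n} t" and zeros: "{x. hermite n x = 0} = t ` {1..n}"
    and "odd i" "1 \<le> K" "K < n" "t K < 0" "0 < t (Suc K)"
    and "j \<le> Suc n" "x \<in> gap (insert_node K 0 t) (Suc n) j"
  shows "0 \<le> -1 * (-1) ^ (n + j) * (x ^ i * hermite_fun n x)"
proof -
  have "j \<le> K \<and> x \<in> gap t n j \<and> x < 0 \<or> K < j \<and> x \<in> gap t n (j - 1) \<and> 0 < x"
    using gap_insert_node[OF mono _ _ _ assms(8,9)] assms(4-7) by simp
  then show ?thesis
  proof (elim disjE conjE)
    assume "j \<le> K" "x \<in> gap t n j" "x < 0"
    with \<open>K < n\<close> \<open>odd i\<close> show ?thesis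
      by (intro hermite_moment_sign_on_gap[OF mono zeros]) (simp_all add: power_less_zero_eq less_imp_le)
  next
    assume "K < j" "x \<in> gap t n (j - 1)" "0 < x"
    then have "0 \<le> 1 * (-1) ^ (n + (j - 1)) * (x ^ i * hermite_fun n x)"
      using assms(8) by (intro hermite_moment_sign_on_gap[OF mono zeros]) simp_all
    moreover have "0 < j"
      using \<open>K < j\<close> by simp
    ultimately show ?thesis
      unfolding minus_one_power_pred[OF \<open>0 < j\<close>] by simp
  qed
qed

lemma integral_even_moment_abs_hermite_fun:
  assumes "i < n" "even i"
    and mono: "strict_mono_on {1..n} t" and zeros: "{x. hermite n x = 0} = t ` {1..n}"
  shows "integrable lborel (\<lambda>x. x ^ i / fact i * \<bar>hermite_fun n x\<bar>)"
    and "(\<integral>x. x ^ i / fact i * \<bar>hermite_fun n x\<bar> \<partial>lborel)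
           = 1 / fact n * (\<Sum>m=1..n. (-1) ^ (m + n) * inner_term n i (t m))"
proof -
  have integrand: "(\<lambda>x. x ^ i / fact i * \<bar>hermite_fun n x\<bar>) = (\<lambda>x. \<bar>x ^ i / fact i * hermite_fun n x\<bar>)"
    using \<open>even i\<close> by (simp add: abs_mult power_abs power_even_abs)
  have sign: "0 \<le> 1 * (-1) ^ (n + j) * (x ^ i * hermite_fun n x)" if "j \<le> n" "x \<in> gap t n j" for j x
    using \<open>even i\<close> by (intro hermite_moment_sign_on_gap[OF mono zeros that]) (simp add: zero_le_even_power)
  have unit: "\<bar>1::real\<bar> = 1"
    by simp
  show "integrable lborel (\<lambda>x. x ^ i / fact i * \<bar>hermite_fun n x\<bar>)"
    unfolding integrand using sign unit by (rule integral_abs_hermite_moment(1)[OF \<open>i < n\<close> mono])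
  have "(\<integral>x. x ^ i / fact i * \<bar>hermite_fun n x\<bar> \<partial>lborel)
      = 1 / fact n * (\<Sum>m=1..n. (1 + 1) / 2 * (-1) ^ (n + m) * inner_term n i (t m))"
    unfolding integrand using sign unit by (rule integral_abs_hermite_moment(2)[OF \<open>i < n\<close> mono])
  then show "(\<integral>x. x ^ i / fact i * \<bar>hermite_fun n x\<bar> \<partial>lborel)
           = 1 / fact n * (\<Sum>m=1..n. (-1) ^ (m + n) * inner_term n i (t m))"
    by (simp add: add.commute)
qed

lemma integral_odd_moment_abs_hermite_fun_odd:
  assumes "i < n" "odd i" "odd n"
    and mono: "strict_mono_on {1..n} t" and zeros: "{x. hermite n x = 0} = t ` {1..n}"
  shows "integrable lborel (\<lambda>x. \<bar>x\<bar> ^ i / fact i * \<bar>hermite_fun n x\<bar>)"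
    and "(\<integral>x. \<bar>x\<bar> ^ i / fact i * \<bar>hermite_fun n x\<bar> \<partial>lborel)
           = 1 / fact n * (\<Sum>m=1..(n - 1) div 2. (-1) ^ m * inner_term n i (t m))
             + 1 / fact n * (\<Sum>m=(n + 3) div 2..n. (-1) ^ (m + 1) * inner_term n i (t m))"
proof -
  define K where "K = n div 2"
  have K: "Suc K \<le> n" "(n - 1) div 2 = K" "(n + 3) div 2 = Suc (Suc K)"
    using \<open>odd n\<close> by (auto simp: K_def elim!: oddE)
  have middle: "t (Suc K) = 0"
    unfolding K_def by (rule hermite_zero_middle[OF mono zeros \<open>odd n\<close>])
  define \<sigma> :: "nat \<Rightarrow> real" where "\<sigma> j = (if j \<le> K then -1 else 1)" for j
  have sign: "0 \<le> \<sigma> j * (-1) ^ (n + j) * (x ^ i * hermite_fun n x)" if "j \<le> n" "x \<in> gap t n j" for j x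
    unfolding \<sigma>_def using that K(1) by (rule odd_moment_sign_on_gap_middle_zero[OF mono zeros \<open>odd i\<close> middle])
  have unit: "\<bar>\<sigma> j\<bar> = 1" for j
    by (simp add: \<sigma>_def)
  define c where "c m = (\<sigma> m + \<sigma> (m - 1)) / 2 * (-1) ^ (n + m)" for m
  have c_low: "c m = (-1) ^ m" if "m \<in> {1..K}" for m
    using that \<open>odd n\<close> by (auto simp: c_def \<sigma>_def power_add)
  have c_high: "c m = (-1) ^ (m + 1)" if "m \<in> {Suc (Suc K)..n}" for m
    using that \<open>odd n\<close> by (auto simp: c_def \<sigma>_def power_add)
  have "(\<Sum>m=1..n. c m * inner_term n i (t m))
      = (\<Sum>m=1..K. c m * inner_term n i (t m)) + c (Suc K) * inner_term n i (t (Suc K))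
        + (\<Sum>m=Suc (Suc K)..n. c m * inner_term n i (t m))"
    using K(1) by (intro sum_split_at) auto
  also have "\<dots> = (\<Sum>m=1..K. (-1) ^ m * inner_term n i (t m))
      + (\<Sum>m=Suc (Suc K)..n. (-1) ^ (m + 1) * inner_term n i (t m))"
    using c_low c_high by (simp add: c_def \<sigma>_def del: atLeastAtMost_iff cong: sum.cong)
  finally have sum: "(\<Sum>m=1..n. c m * inner_term n i (t m))
      = (\<Sum>m=1..K. (-1) ^ m * inner_term n i (t m)) + (\<Sum>m=Suc (Suc K)..n. (-1) ^ (m + 1) * inner_term n i (t m))" .
  have integrand: "(\<lambda>x. \<bar>x\<bar> ^ i / fact i * \<bar>hermite_fun n x\<bar>) = (\<lambda>x. \<bar>x ^ i / fact i * hermite_fun n x\<bar>)"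
    by (simp add: abs_mult power_abs)
  show "integrable lborel (\<lambda>x. \<bar>x\<bar> ^ i / fact i * \<bar>hermite_fun n x\<bar>)"
    unfolding integrand using sign unit by (rule integral_abs_hermite_moment(1)[OF \<open>i < n\<close> mono])
  have "(\<integral>x. \<bar>x\<bar> ^ i / fact i * \<bar>hermite_fun n x\<bar> \<partial>lborel)
      = 1 / fact n * (\<Sum>m=1..n. c m * inner_term n i (t m))"
    unfolding integrand c_def using sign unit by (rule integral_abs_hermite_moment(2)[OF \<open>i < n\<close> mono])
  then show "(\<integral>x. \<bar>x\<bar> ^ i / fact i * \<bar>hermite_fun n x\<bar> \<partial>lborel)
           = 1 / fact n * (\<Sum>m=1..(n - 1) div 2. (-1) ^ m * inner_term n i (t m))
             + 1 / fact n * (\<Sum>m=(n + 3) div 2..n. (-1) ^ (m + 1) * inner_term n i (t m))"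
    unfolding sum K(2,3) by (simp only: distrib_left)
qed

lemma integral_odd_moment_abs_hermite_fun_even:
  assumes "i < n" "odd i" "even n"
    and mono: "strict_mono_on {1..n} t" and zeros: "{x. hermite n x = 0} = t ` {1..n}"
  shows "integrable lborel (\<lambda>x. \<bar>x\<bar> ^ i / fact i * \<bar>hermite_fun n x\<bar>)"
    and "(\<integral>x. \<bar>x\<bar> ^ i / fact i * \<bar>hermite_fun n x\<bar> \<partial>lborel)
           = 1 / fact n * (\<Sum>m=1..n div 2. (-1) ^ (m + 1) * inner_term n i (t m))
             + (-1) ^ (n div 2) * fact (n - 1 - i) / (fact n * 2 ^ i) * hermite_fun (n - 1 - i) 0
             + 1 / fact n * (\<Sum>m=n div 2 + 1..n. (-1) ^ m * inner_term n i (t m))"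
proof -
  define K where "K = n div 2"
  have K: "1 \<le> K" "K < n"
    using \<open>even n\<close> \<open>odd i\<close> \<open>i < n\<close> by (auto simp: K_def elim!: evenE oddE)
  have below: "t K < 0" and above: "0 < t (Suc K)"
    using hermite_zero_negative_iff[OF mono zeros, of K] hermite_zero_negative_iff[OF mono zeros, of "Suc K"]
      hermite_zero_nonzero[OF mono zeros \<open>even n\<close>, of "Suc K"] K
    unfolding K_def[symmetric] by auto
  text \<open>The point 0 is not a zero of \<open>H\<^sub>n\<close>, but \<open>\<bar>x\<bar> ^ i\<close> switches from \<open>- x ^ i\<close> to \<open>x ^ i\<close>
    there, so it is inserted as an extra node between \<open>t K\<close> and \<open>t (K + 1)\<close>.\<close>
  define s where "s = insert_node K 0 t"
  have mono_s: "strict_mono_on {1..Suc n} s"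
    unfolding s_def using mono K below above by (intro strict_mono_on_insert_node) auto
  have sign: "0 \<le> -1 * (-1) ^ (n + j) * (x ^ i * hermite_fun n x)"
    if "j \<le> Suc n" "x \<in> gap s (Suc n) j" for j x
    using that unfolding s_def by (rule odd_moment_sign_on_gap_insert_zero[OF mono zeros \<open>odd i\<close> K below above])
  have unit: "\<bar>-1::real\<bar> = 1"
    by simp
  have integrand: "(\<lambda>x. \<bar>x\<bar> ^ i / fact i * \<bar>hermite_fun n x\<bar>) = (\<lambda>x. \<bar>x ^ i / fact i * hermite_fun n x\<bar>)"
    by (simp add: abs_mult power_abs)
  show "integrable lborel (\<lambda>x. \<bar>x\<bar> ^ i / fact i * \<bar>hermite_fun n x\<bar>)"
    unfolding integrand using sign unit by (rule integral_abs_hermite_moment(1)[OF \<open>i < n\<close> mono_s])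
  have "(\<integral>x. \<bar>x\<bar> ^ i / fact i * \<bar>hermite_fun n x\<bar> \<partial>lborel)
      = 1 / fact n * (\<Sum>m=1..Suc n. (-1 + -1) / 2 * (-1) ^ (n + m) * inner_term n i (s m))"
    unfolding integrand using sign unit by (rule integral_abs_hermite_moment(2)[OF \<open>i < n\<close> mono_s])
  also have "(\<Sum>m=1..Suc n. (-1 + -1) / 2 * (-1) ^ (n + m) * inner_term n i (s m))
      = (\<Sum>m=1..K. (-1) ^ (m + 1) * inner_term n i (t m)) + (-1) ^ (Suc K + 1) * inner_term n i 0
        + (\<Sum>m=Suc K..n. (-1) ^ (Suc m + 1) * inner_term n i (t m))"
    unfolding s_def using K \<open>even n\<close> by (subst sum_insert_node) (simp_all add: power_add)
  finally show "(\<integral>x. \<bar>x\<bar> ^ i / fact i * \<bar>hermite_fun n x\<bar> \<partial>lborel)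
           = 1 / fact n * (\<Sum>m=1..n div 2. (-1) ^ (m + 1) * inner_term n i (t m))
             + (-1) ^ (n div 2) * fact (n - 1 - i) / (fact n * 2 ^ i) * hermite_fun (n - 1 - i) 0
             + 1 / fact n * (\<Sum>m=n div 2 + 1..n. (-1) ^ m * inner_term n i (t m))"
    using \<open>i < n\<close> unfolding K_def by (simp add: inner_term_at_0 field_simps)
qed

theorem theorem3p3:
  fixes n i :: nat and t :: "nat \<Rightarrow> real"
  assumes n: "n \<ge> 1" and i: "i \<le> n - 1"
    and t_mono: "strict_mono_on {1..n} t"
    and t_zeros: "{x. hermite n x = 0} = t ` {1..n}"
  shows
   "(even i \<longrightarrow>
       integrable lborel (\<lambda>x. x ^ i / fact i * \<bar>hermite_fun n x\<bar>) \<and>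
       (\<integral>x. x ^ i / fact i * \<bar>hermite_fun n x\<bar> \<partial>lborel) =
         1 / fact n * (\<Sum>m=1..n. (-1) ^ (m + n) * inner_term n i (t m))) \<and>
    (odd i \<and> even n \<longrightarrow>
       integrable lborel (\<lambda>x. \<bar>x\<bar> ^ i / fact i * \<bar>hermite_fun n x\<bar>) \<and>
       (\<integral>x. \<bar>x\<bar> ^ i / fact i * \<bar>hermite_fun n x\<bar> \<partial>lborel) =
         1 / fact n * (\<Sum>m=1..n div 2. (-1) ^ (m + 1) * inner_term n i (t m))
         + (-1) ^ (n div 2) * fact (n - 1 - i) / (fact n * 2 ^ i) * hermite_fun (n - 1 - i) 0
         + 1 / fact n * (\<Sum>m=n div 2 + 1..n. (-1) ^ m * inner_term n i (t m))) \<and>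
    (odd i \<and> odd n \<longrightarrow>
       integrable lborel (\<lambda>x. \<bar>x\<bar> ^ i / fact i * \<bar>hermite_fun n x\<bar>) \<and>
       (\<integral>x. \<bar>x\<bar> ^ i / fact i * \<bar>hermite_fun n x\<bar> \<partial>lborel) =
         1 / fact n * (\<Sum>m=1..(n - 1) div 2. (-1) ^ m * inner_term n i (t m))
         + 1 / fact n * (\<Sum>m=(n + 3) div 2..n. (-1) ^ (m + 1) * inner_term n i (t m)))"
proof -
  have "i < n"
    using n i by linarith
  show ?thesis
    using integral_even_moment_abs_hermite_fun[OF \<open>i < n\<close> _ t_mono t_zeros]
      integral_odd_moment_abs_hermite_fun_even[OF \<open>i < n\<close> _ _ t_mono t_zeros]
      integral_odd_moment_abs_hermite_fun_odd[OF \<open>i < n\<close> _ _ t_mono t_zeros]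
    by blast
qed

end
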